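(* Let $G\ge1$ and, for each group $v\in\{1,\ldots,G\}$, let $X_{v1},\ldots,X_{vN_v}\in L^2[0,1]$ be observed functions (assumed mean zero). Fix a number of layers $D\ge1$ and, for each layer $d=1,\ldots,D$, a partition of $\{1,\ldots,G\}$ into disjoint communities $\mathcal{K}_{d1},\mathcal{K}_{d2},\ldots$, such that the partitions are nested: every community of layer $d$ is contained in some community of layer $d-1$ ($d\ge2$). Write $c_{v,d}$ for the index $i$ of the community $\mathcal{K}_{di}$ containing $v$. Fix weights $f_v^{(d-1)}>0$. Define recursively, for $d=1,\ldots,D$: $R^{(0)}_{vn}=X_{vn}$; $$\widehat\Gamma^{(d-1)}_v(\cdot)=\frac1{N_v}\sum_{n=1}^{N_v}\langle R^{(d-1)}_{vn},\cdot\rangle R^{(d-1)}_{vn};$$ for each community $\mathcal{K}_{di}$, let $\hat\psi_{di}$ be a unit-norm eigenfunction of $\sum_{v\in\mathcal{K}_{di}}f^{(d-1)}_v\widehat\Gamma^{(d-1)}_v$ associated with its largest eigenvalue, assumed strictly positive (equivalently, $\hat\psi_{di}$ maximizes $\sum_{v\in\mathcal{K}_{di}}\sum_{n=1}^{N_v}N_v^{-1}f_v^{(d-1)}\langle R^{(d-1)}_{vn},\phi\rangle^2$ over $\|\phi\|=1$); set $\hat\phi_d^{(c_{v,d})}=\hat\psi_{di}$ for $v\in\mathcal{K}_{di}$; and set $$R^{(d)}_{vn}=X_{vn}-\sum_{j=1}^{d}\langle X_{vn},\hat\phi_j^{(c_{v,j})}\rangle\hat\phi_j^{(c_{v,j})}.$$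 Then for every group $v$, the functions $\hat\phi_1^{(c_{v,1})},\ldots,\hat\phi_D^{(c_{v,D})}$ are orthonormal in $L^2[0,1]$, i.e. $\langle\hat\phi_d^{(c_{v,d})},\hat\phi_{d'}^{(c_{v,d'})}\rangle=0$ for $d\neq d'$ and $\|\hat\phi_d^{(c_{v,d})}\|=1$.
   Context: $L^2[0,1]$ is equipped with the inner product $\langle x,y\rangle=\int_0^1 x(t)y(t)\,dt$ and norm $\|x\|^2=\langle x,x\rangle$. A "community" is a set of groups that share one common filtrated functional principal component in a given layer; the communities of each layer form a partition of the groups, and the partitions across layers form a tree (nested) structure. *)

theory Defs
  imports "HOL-Analysis.Analysis"
begin

text \<open>Elements of L^2[0,1] are represented by real functions on the reals that are
  Lebesgue measurable on [0,1] and square integrable there; functions are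
  identified up to a.e. equality only through the inner product.\<close>

definition L2 :: "(real \<Rightarrow> real) set" where
  "L2 = {x. x \<in> borel_measurable (lebesgue_on {0..1}) \<and> (\<lambda>t. (x t)^2) integrable_on {0..1}}"

definition l2ip :: "(real \<Rightarrow> real) \<Rightarrow> (real \<Rightarrow> real) \<Rightarrow> real" where
  "l2ip x y = integral {0..1} (\<lambda>t. x t * y t)"

definition l2norm :: "(real \<Rightarrow> real) \<Rightarrow> real" where
  "l2norm x = sqrt (l2ip x x)"

definition l2eq :: "(real \<Rightarrow> real) \<Rightarrow> (real \<Rightarrow> real) \<Rightarrow> bool" where
  "l2eq x y \<longleftrightarrow> l2norm (\<lambda>t. x t - y t) = 0"

definition is_eigenfunction ::
  "((real \<Rightarrow> real) \<Rightarrow> (real \<Rightarrow> real)) \<Rightarrow> (real \<Rightarrow> real) \<Rightarrow> real \<Rightarrow> bool" where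
  "is_eigenfunction T phi lam \<longleftrightarrow>
     phi \<in> L2 \<and> \<not> l2eq phi (\<lambda>t. 0) \<and> l2eq (T phi) (\<lambda>t. lam * phi t)"

definition is_top_unit_eigenfunction ::
  "((real \<Rightarrow> real) \<Rightarrow> (real \<Rightarrow> real)) \<Rightarrow> (real \<Rightarrow> real) \<Rightarrow> bool" where
  "is_top_unit_eigenfunction T phi \<longleftrightarrow>
     l2norm phi = 1 \<and>
     (\<exists>lam. lam > 0 \<and> is_eigenfunction T phi lam \<and>
        (\<forall>mu psi. is_eigenfunction T psi mu \<longrightarrow> mu \<le> lam))"

text \<open>Community membership: c d v is the index of the community of layer d containing v;
  psi d i is the estimated component of community i of layer d.\<close>
definition comm_phi :: "(nat \<Rightarrow> nat \<Rightarrow> real \<Rightarrow> real) \<Rightarrow> (nat \<Rightarrow> nat \<Rightarrow> nat) \<Rightarrow> nat \<Rightarrow> nat \<Rightarrow> real \<Rightarrow> real" where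
  "comm_phi psi c d v = psi d (c d v)"

definition resid ::
  "(nat \<Rightarrow> nat \<Rightarrow> real \<Rightarrow> real) \<Rightarrow> (nat \<Rightarrow> nat \<Rightarrow> real \<Rightarrow> real) \<Rightarrow> (nat \<Rightarrow> nat \<Rightarrow> nat)
     \<Rightarrow> nat \<Rightarrow> nat \<Rightarrow> nat \<Rightarrow> real \<Rightarrow> real" where
  "resid X psi c d v n = (\<lambda>t. X v n t -
      (\<Sum>j=1..d. l2ip (X v n) (comm_phi psi c j v) * comm_phi psi c j v t))"

definition cov_op ::
  "(nat \<Rightarrow> nat) \<Rightarrow> (nat \<Rightarrow> nat \<Rightarrow> real \<Rightarrow> real) \<Rightarrow> (nat \<Rightarrow> nat \<Rightarrow> real \<Rightarrow> real) \<Rightarrow> (nat \<Rightarrow> nat \<Rightarrow> nat)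
     \<Rightarrow> nat \<Rightarrow> nat \<Rightarrow> (real \<Rightarrow> real) \<Rightarrow> real \<Rightarrow> real" where
  "cov_op N X psi c d v phi = (\<lambda>t. (1 / real (N v)) *
      (\<Sum>n=1..N v. l2ip (resid X psi c (d - 1) v n) phi * resid X psi c (d - 1) v n t))"

text \<open>Weighted community operator sum_{v in K_{di}} f^{(d-1)}_v Gamma^{(d-1)}_v, where
  K_{di} = {v in {1..G}. c d v = i} and f d v stands for f^{(d-1)}_v.\<close>
definition comm_op ::
  "nat \<Rightarrow> (nat \<Rightarrow> nat) \<Rightarrow> (nat \<Rightarrow> nat \<Rightarrow> real \<Rightarrow> real) \<Rightarrow> (nat \<Rightarrow> nat \<Rightarrow> real)
     \<Rightarrow> (nat \<Rightarrow> nat \<Rightarrow> real \<Rightarrow> real) \<Rightarrow> (nat \<Rightarrow> nat \<Rightarrow> nat)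
     \<Rightarrow> nat \<Rightarrow> nat \<Rightarrow> (real \<Rightarrow> real) \<Rightarrow> real \<Rightarrow> real" where
  "comm_op G N X f psi c d i phi = (\<lambda>t.
      \<Sum>v\<in>{v\<in>{1..G}. c d v = i}. f d v * cov_op N X psi c d v phi t)"

end

theory Submission
  imports Defs
begin

text \<open>The residuals R^{(d-1)}_{vn} of every group v in a
  community K_{di} are orthogonal to the earlier components of v, and by nestedness these
  are the same for all groups of K_{di}. Hence the community operator maps into the
  orthogonal complement of the earlier components; since the top eigenvalue is positive,
  the eigenfunction psi_{di} lies in that complement as well.\<close>

lemma L2_mult_integrable:
  assumes "x \<in> L2" "y \<in> L2"
  shows "(\<lambda>t. x t * y t) integrable_on {0..1}"
proof (rule measurable_bounded_by_integrable_imp_integrable_real)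
  show "(\<lambda>t. x t * y t) \<in> borel_measurable (lebesgue_on {0..1})"
    using assms unfolding L2_def by (auto intro: borel_measurable_times)
  show "(\<lambda>t. (x t)^2 / 2 + (y t)^2 / 2) integrable_on {0..1}"
    using assms unfolding L2_def by (intro integrable_add integrable_on_divide) auto
  show "\<bar>x t * y t\<bar> \<le> (x t)^2 / 2 + (y t)^2 / 2" for t
  proof -
    have "0 \<le> (\<bar>x t\<bar> - \<bar>y t\<bar>)^2" by simp
    then show ?thesis by (simp add: power2_eq_square algebra_simps abs_mult)
  qed
qed auto

lemma L2_zero: "(\<lambda>t. 0) \<in> L2"
  unfolding L2_def by auto

lemma L2_add: "x \<in> L2 \<Longrightarrow> y \<in> L2 \<Longrightarrow> (\<lambda>t. x t + y t) \<in> L2"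
proof -
  assume xy: "x \<in> L2" "y \<in> L2"
  have "(\<lambda>t. (x t)^2 + 2 * (x t * y t) + (y t)^2) integrable_on {0..1}"
    using xy L2_mult_integrable[OF xy] unfolding L2_def
    by (intro integrable_add integrable_on_cmult_left) auto
  then show ?thesis
    using xy unfolding L2_def by (auto intro: borel_measurable_add simp: power2_sum algebra_simps)
qed

lemma L2_scale: "x \<in> L2 \<Longrightarrow> (\<lambda>t. a * x t) \<in> L2"
  unfolding L2_def
  using integrable_on_cmult_left[of "\<lambda>t. (x t)^2" "{0..1}" "a^2"]
  by (auto intro: borel_measurable_times simp: power_mult_distrib)

lemma L2_diff: "x \<in> L2 \<Longrightarrow> y \<in> L2 \<Longrightarrow> (\<lambda>t. x t - y t) \<in> L2"
  using L2_add[OF _ L2_scale[of y "-1"]] by simp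

lemma L2_sum: "finite J \<Longrightarrow> (\<And>j. j \<in> J \<Longrightarrow> g j \<in> L2) \<Longrightarrow> (\<lambda>t. \<Sum>j\<in>J. g j t) \<in> L2"
  by (induction J rule: finite_induct) (auto intro: L2_zero L2_add)

lemma L2_weighted_sum:
  "finite J \<Longrightarrow> (\<And>j. j \<in> J \<Longrightarrow> r j \<in> L2) \<Longrightarrow> (\<lambda>t. \<Sum>j\<in>J. a j * r j t) \<in> L2"
  by (rule L2_sum) (auto intro: L2_scale)

lemma l2ip_commute: "l2ip x y = l2ip y x"
  unfolding l2ip_def by (simp add: mult.commute)

lemma l2ip_add_left:
  "x \<in> L2 \<Longrightarrow> y \<in> L2 \<Longrightarrow> z \<in> L2 \<Longrightarrow> l2ip (\<lambda>t. x t + y t) z = l2ip x z + l2ip y z"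
  unfolding l2ip_def using L2_mult_integrable[of x z] L2_mult_integrable[of y z]
  by (simp add: distrib_right integral_add)

lemma l2ip_add_right:
  "x \<in> L2 \<Longrightarrow> y \<in> L2 \<Longrightarrow> z \<in> L2 \<Longrightarrow> l2ip z (\<lambda>t. x t + y t) = l2ip z x + l2ip z y"
  using l2ip_add_left[of x y z] by (simp add: l2ip_commute[of z])

lemma l2ip_scale_left: "l2ip (\<lambda>t. a * x t) z = a * l2ip x z"
  unfolding l2ip_def by (simp add: mult.assoc)

lemma l2ip_scale_right: "l2ip z (\<lambda>t. a * x t) = a * l2ip z x"
  using l2ip_scale_left[of a x z] by (simp add: l2ip_commute[of z])

lemma l2ip_diff_left:
  "x \<in> L2 \<Longrightarrow> y \<in> L2 \<Longrightarrow> z \<in> L2 \<Longrightarrow> l2ip (\<lambda>t. x t - y t) z = l2ip x z - l2ip y z"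
  using l2ip_add_left[OF _ L2_scale[of y "-1"], of x z] l2ip_scale_left[of "-1" y z] by simp

lemma l2ip_sum_left:
  "finite J \<Longrightarrow> (\<And>j. j \<in> J \<Longrightarrow> g j \<in> L2) \<Longrightarrow> z \<in> L2 \<Longrightarrow>
   l2ip (\<lambda>t. \<Sum>j\<in>J. g j t) z = (\<Sum>j\<in>J. l2ip (g j) z)"
proof (induction J rule: finite_induct)
  case empty
  then show ?case by (simp add: l2ip_def)
next
  case (insert a J)
  then show ?case using l2ip_add_left[of "g a" "\<lambda>t. \<Sum>j\<in>J. g j t" z] L2_sum[of J g] by simp
qed

lemma l2ip_weighted_sum_left:
  "finite J \<Longrightarrow> (\<And>j. j \<in> J \<Longrightarrow> r j \<in> L2) \<Longrightarrow> z \<in> L2 \<Longrightarrow>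
   l2ip (\<lambda>t. \<Sum>j\<in>J. a j * r j t) z = (\<Sum>j\<in>J. a j * l2ip (r j) z)"
  by (subst l2ip_sum_left) (auto intro: L2_scale simp: l2ip_scale_left)

lemma l2ip_weighted_sum_orthogonal:
  assumes "finite J" "\<And>j. j \<in> J \<Longrightarrow> r j \<in> L2" "\<And>j. j \<in> J \<Longrightarrow> l2ip (r j) z = 0" "z \<in> L2"
  shows "l2ip (\<lambda>t. \<Sum>j\<in>J. a j * r j t) z = 0"
  using assms by (simp add: l2ip_weighted_sum_left)

lemma l2ip_self_nonneg: "x \<in> L2 \<Longrightarrow> 0 \<le> l2ip x x"
  unfolding l2ip_def L2_def by (auto intro: integral_nonneg simp: power2_eq_square)

lemma quadratic_nonneg_imp_linear_coeff_eq_0: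
  fixes a b :: real
  assumes nonneg: "\<And>s. 0 \<le> 2 * a * s + b * s^2" and "0 \<le> b"
  shows "a = 0"
proof -
  define s where "s = - a / (b + 1)"
  have s: "s * (b + 1) = - a"
    using \<open>0 \<le> b\<close> by (simp add: s_def)
  have "0 \<le> (2 * a * s + b * s^2) * (b + 1)^2"
    using nonneg by simp
  also have "\<dots> = 2 * a * (s * (b + 1)) * (b + 1) + b * (s * (b + 1))^2"
    by (simp add: algebra_simps power2_eq_square)
  also have "\<dots> = - (a^2 * (b + 2))"
    unfolding s by (simp add: algebra_simps power2_eq_square)
  finally have "a^2 * (b + 2) \<le> 0" by simp
  then show "a = 0"
    using \<open>0 \<le> b\<close> by (smt (verit) mult_pos_pos zero_less_power2)
qed

lemma l2ip_self_eq_0_imp_orthogonal: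
  assumes g: "g \<in> L2" and h: "h \<in> L2" and "l2ip g g = 0"
  shows "l2ip g h = 0"
proof (rule quadratic_nonneg_imp_linear_coeff_eq_0)
  show "0 \<le> l2ip h h" using h by (rule l2ip_self_nonneg)
  fix s
  have sh: "(\<lambda>t. s * h t) \<in> L2" using h by (rule L2_scale)
  have "0 \<le> l2ip (\<lambda>t. g t + s * h t) (\<lambda>t. g t + s * h t)"
    using L2_add[OF g sh] by (rule l2ip_self_nonneg)
  also have "\<dots> = l2ip g g + 2 * s * l2ip g h + s^2 * l2ip h h"
    using g h sh L2_add[OF g sh]
    by (simp add: l2ip_add_left l2ip_add_right l2ip_scale_left l2ip_scale_right
        l2ip_commute[of h g] power2_eq_square algebra_simps)
  finally show "0 \<le> 2 * l2ip g h * s + l2ip h h * s^2"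
    using \<open>l2ip g g = 0\<close> by (simp add: algebra_simps)
qed

lemma l2eq_imp_l2ip_left_eq:
  assumes "l2eq x y" "x \<in> L2" "y \<in> L2" "z \<in> L2"
  shows "l2ip x z = l2ip y z"
proof -
  have "l2ip (\<lambda>t. x t - y t) (\<lambda>t. x t - y t) = 0"
    using \<open>l2eq x y\<close> unfolding l2eq_def l2norm_def by simp
  then have "l2ip (\<lambda>t. x t - y t) z = 0"
    using l2ip_self_eq_0_imp_orthogonal[OF L2_diff] assms by blast
  then show ?thesis
    using assms by (simp add: l2ip_diff_left)
qed

lemma eigenfunction_orthogonal_if_image_orthogonal:
  assumes "l2eq (T phi) (\<lambda>t. lam * phi t)" "lam \<noteq> 0"
    and "phi \<in> L2" "T phi \<in> L2" "z \<in> L2" "l2ip (T phi) z = 0"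
  shows "l2ip phi z = 0"
  using l2eq_imp_l2ip_left_eq[OF assms(1,4) L2_scale[OF \<open>phi \<in> L2\<close>] \<open>z \<in> L2\<close>] assms
  by (simp add: l2ip_scale_left)

lemma l2ip_projection_residual_orthogonal:
  assumes "finite A" "x \<in> L2" "\<And>a. a \<in> A \<Longrightarrow> e a \<in> L2"
    and orthonormal: "\<And>a b. a \<in> A \<Longrightarrow> b \<in> A \<Longrightarrow> l2ip (e a) (e b) = (if a = b then 1 else 0)"
    and "j \<in> A"
  shows "l2ip (\<lambda>t. x t - (\<Sum>a\<in>A. l2ip x (e a) * e a t)) (e j) = 0"
proof -
  have "l2ip (\<lambda>t. \<Sum>a\<in>A. l2ip x (e a) * e a t) (e j)
      = (\<Sum>a\<in>A. l2ip x (e a) * (if a = j then 1 else 0))"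
    using assms by (simp add: l2ip_weighted_sum_left)
  also have "\<dots> = l2ip x (e j)"
    using assms by (simp add: if_distrib sum.delta cong: if_cong)
  finally show ?thesis
    using assms by (simp add: l2ip_diff_left L2_weighted_sum)
qed

locale nested_community_fpca =
  fixes G D :: nat
    and N :: "nat \<Rightarrow> nat"
    and X :: "nat \<Rightarrow> nat \<Rightarrow> real \<Rightarrow> real"
    and c :: "nat \<Rightarrow> nat \<Rightarrow> nat"
    and f :: "nat \<Rightarrow> nat \<Rightarrow> real"
    and psi :: "nat \<Rightarrow> nat \<Rightarrow> real \<Rightarrow> real"
  assumes X_L2: "\<And>v n. v \<in> {1..G} \<Longrightarrow> n \<in> {1..N v} \<Longrightarrow> X v n \<in> L2"
    and nested: "\<And>d v w. d \<in> {2..D} \<Longrightarrow> v \<in> {1..G} \<Longrightarrow> w \<in> {1..G} \<Longrightarrow>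
                   c d v = c d w \<Longrightarrow> c (d - 1) v = c (d - 1) w"
    and psi_eig: "\<And>d i. d \<in> {1..D} \<Longrightarrow> (\<exists>v\<in>{1..G}. c d v = i) \<Longrightarrow>
                   is_top_unit_eigenfunction (comm_op G N X f psi c d i) (psi d i)"
begin

abbreviation phi :: "nat \<Rightarrow> nat \<Rightarrow> real \<Rightarrow> real" where
  "phi d v \<equiv> comm_phi psi c d v"

lemma same_community_below:
  assumes "d \<le> D" "v \<in> {1..G}" "w \<in> {1..G}" "c d v = c d w" "j \<in> {1..d}"
  shows "c j v = c j w"
proof -
  have "j \<le> d" "c d v = c d w" using assms by auto
  then show ?thesis
  proof (induction d rule: dec_induct)
    case (step m)
    then show ?case
      using nested[of "Suc m" v w] assms by auto
  qed
qed

lemma phi_L2_unit: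
  assumes "d \<in> {1..D}" "w \<in> {1..G}"
  shows "phi d w \<in> L2" "l2ip (phi d w) (phi d w) = 1"
proof -
  have "is_top_unit_eigenfunction (comm_op G N X f psi c d (c d w)) (psi d (c d w))"
    using psi_eig assms by blast
  then show "phi d w \<in> L2" "l2ip (phi d w) (phi d w) = 1"
    unfolding is_top_unit_eigenfunction_def is_eigenfunction_def comm_phi_def l2norm_def
    by auto
qed

lemma resid_L2:
  assumes "k \<le> D" "v \<in> {1..G}" "n \<in> {1..N v}"
  shows "resid X psi c k v n \<in> L2"
  unfolding resid_def using assms
  by (intro L2_diff X_L2 L2_weighted_sum phi_L2_unit) auto

lemma comm_op_L2:
  assumes "d \<in> {1..D}"
  shows "comm_op G N X f psi c d i u \<in> L2"
  unfolding comm_op_def cov_op_def using assms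
  by (intro L2_weighted_sum L2_scale resid_L2) auto

lemma comm_op_orthogonal:
  assumes "d \<in> {1..D}" "z \<in> L2"
    and resid_orth: "\<And>v n. v \<in> {1..G} \<Longrightarrow> c d v = i \<Longrightarrow> n \<in> {1..N v} \<Longrightarrow>
                       l2ip (resid X psi c (d - 1) v n) z = 0"
  shows "l2ip (comm_op G N X f psi c d i u) z = 0"
proof -
  have cov_orth: "l2ip (cov_op N X psi c d v u) z = 0" if "v \<in> {1..G}" "c d v = i" for v
    unfolding cov_op_def l2ip_scale_left mult_eq_0_iff using that assms
    by (intro disjI2 l2ip_weighted_sum_orthogonal resid_L2) auto
  have "cov_op N X psi c d v u \<in> L2" if "v \<in> {1..G}" for v
    unfolding cov_op_def using that assms
    by (intro L2_scale L2_weighted_sum resid_L2) auto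
  then show ?thesis
    unfolding comm_op_def using assms cov_orth
    by (intro l2ip_weighted_sum_orthogonal) auto
qed

lemma phi_orthogonal_to_earlier:
  assumes d: "d \<in> {1..D}" and w: "w \<in> {1..G}" and j: "j \<in> {1..<d}"
    and orthonormal_below: "\<And>v a b. v \<in> {1..G} \<Longrightarrow> a \<in> {1..<d} \<Longrightarrow> b \<in> {1..<d} \<Longrightarrow>
                              l2ip (phi a v) (phi b v) = (if a = b then 1 else 0)"
  shows "l2ip (phi d w) (phi j w) = 0"
proof -
  define i where "i = c d w"
  obtain lam where "lam > 0" "psi d i \<in> L2"
    and eigen: "l2eq (comm_op G N X f psi c d i (psi d i)) (\<lambda>t. lam * psi d i t)"
    using psi_eig[OF d, of i] w
    unfolding i_def is_top_unit_eigenfunction_def is_eigenfunction_def by blast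
  have phi_j: "phi j w \<in> L2" using j d w by (intro phi_L2_unit) auto
  have "l2ip (resid X psi c (d - 1) v n) (phi j w) = 0"
    if v: "v \<in> {1..G}" "c d v = i" and n: "n \<in> {1..N v}" for v n
  proof -
    have "phi j v = phi j w"
      using same_community_below[of d v w j] v w d j unfolding i_def comm_phi_def by auto
    moreover have "l2ip (resid X psi c (d - 1) v n) (phi j v) = 0"
      unfolding resid_def using d j v n orthonormal_below
      by (intro l2ip_projection_residual_orthogonal X_L2 phi_L2_unit) auto
    ultimately show ?thesis by simp
  qed
  then have "l2ip (comm_op G N X f psi c d i (psi d i)) (phi j w) = 0"
    using d phi_j by (intro comm_op_orthogonal)
  then have "l2ip (psi d i) (phi j w) = 0"
    using eigenfunction_orthogonal_if_image_orthogonal[where T = "comm_op G N X f psi c d i", OF eigen] \<open>lam > 0\<close> \<open>psi d i \<in> L2\<close>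
      comm_op_L2[OF d] phi_j by simp
  then show ?thesis unfolding i_def comm_phi_def .
qed

lemma phi_orthonormal:
  assumes "m \<le> D" "v \<in> {1..G}" "a \<in> {1..m}" "b \<in> {1..m}"
  shows "l2ip (phi a v) (phi b v) = (if a = b then 1 else 0)"
  using assms
proof (induction m arbitrary: v a b)
  case 0
  then show ?case by simp
next
  case (Suc m)
  have below: "l2ip (phi a' v') (phi b' v') = (if a' = b' then 1 else 0)"
    if "v' \<in> {1..G}" "a' \<in> {1..<Suc m}" "b' \<in> {1..<Suc m}" for v' a' b'
    using Suc.IH[of v' a' b'] Suc.prems that by auto
  consider "a = b" | "a < b" | "b < a" by linarith
  then show ?case
  proof cases
    case 1
    then show ?thesis using phi_L2_unit Suc.prems by auto
  next
    case 2
    then show ?thesis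
      using phi_orthogonal_to_earlier[of b v a, OF _ _ _ below] Suc.prems
      by (auto simp: l2ip_commute[of "phi a v"])
  next
    case 3
    then show ?thesis
      using phi_orthogonal_to_earlier[of a v b, OF _ _ _ below] Suc.prems by auto
  qed
qed

end

theorem proposition2:
  fixes G D :: nat
    and N :: "nat \<Rightarrow> nat"
    and X :: "nat \<Rightarrow> nat \<Rightarrow> real \<Rightarrow> real"
    and c :: "nat \<Rightarrow> nat \<Rightarrow> nat"
    and f :: "nat \<Rightarrow> nat \<Rightarrow> real"
    and psi :: "nat \<Rightarrow> nat \<Rightarrow> real \<Rightarrow> real"
  assumes G_pos: "G \<ge> 1"
    and D_pos: "D \<ge> 1"
    and N_pos: "\<And>v. v \<in> {1..G} \<Longrightarrow> N v \<ge> 1"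
    and X_L2: "\<And>v n. v \<in> {1..G} \<Longrightarrow> n \<in> {1..N v} \<Longrightarrow> X v n \<in> L2"
    and nested: "\<And>d v w. d \<in> {2..D} \<Longrightarrow> v \<in> {1..G} \<Longrightarrow> w \<in> {1..G} \<Longrightarrow>
                   c d v = c d w \<Longrightarrow> c (d - 1) v = c (d - 1) w"
    and f_pos: "\<And>d v. d \<in> {1..D} \<Longrightarrow> v \<in> {1..G} \<Longrightarrow> f d v > 0"
    and psi_eig: "\<And>d i. d \<in> {1..D} \<Longrightarrow> (\<exists>v\<in>{1..G}. c d v = i) \<Longrightarrow>
                   is_top_unit_eigenfunction (comm_op G N X f psi c d i) (psi d i)"
  shows "\<forall>v\<in>{1..G}. \<forall>d\<in>{1..D}. \<forall>d'\<in>{1..D}.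
           l2ip (comm_phi psi c d v) (comm_phi psi c d' v) = (if d = d' then 1 else 0)"
proof -
  interpret nested_community_fpca G D N X c f psi
    using X_L2 nested psi_eig by unfold_locales
  show ?thesis using phi_orthonormal[of D] by blast
qed

end
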